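(* Let $A\subseteq B$ be commutative semirings, $S=A[x_1,\dots,x_n]$, $\rho$ a congruence on $B$, and $T\subseteq S\times S$ non-empty. Then there is a bijection between $Z_\rho(T)(B)/\rho$ and $\mathrm{Hom}_{A\text{-alg}}(S/T^{c},B/\rho)$; in particular $\#\,Z_\rho(T)(B)/\rho=\#\,\mathrm{Hom}_{A\text{-alg}}(S/T^{c},B/\rho)$. In particular, if $\rho=\mathrm{id}_B$, then $\#\,Z_{\mathrm{id}_B}(T)(B)=\#\,\mathrm{Hom}_{A\text{-alg}}(S/T^{c},B)$.
   Context: Semirings are commutative with $0$ and $1\neq0$, $0a=0$; congruences are equivalence relations compatible with $+$ and $\cdot$; $\mathrm{id}_B=\{(b,b)\}$. $T^{c}$ is the congruence on $S$ generated by $T$. $Z_\rho(T)(B)=\{P\in B^n:(f(P),g(P))\in\rho\ \forall(f,g)\in T\}$. For $Y\subseteq B^n$, $Y/\rho=\{(\bar c_1,\dots,\bar c_n):(c_1,\dots,c_n)\in Y\}\subseteq(B/\rho)^n$ where $\bar c$ is the class of $c$ modulo $\rho$. An $A$-semialgebra is a commutative semiring $C$ which is an $A$-semimodule with $a(bc)=(ab)c=b(ac)$; $S/T^{c}$ and $B/\rho$ are $A$-semialgebras via $A\hookrightarrow S\to S/T^{c}$ and $A\hookrightarrow B\to B/\rho$. $\mathrm{Hom}_{A\text{-alg}}(C,D)$ is the set of maps that are semiring homomorphisms (preserving $0,1,+,\cdot$) and $A$-semimodule homomorphisms. *)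

theory Defs
  imports Main "HOL-Library.Poly_Mapping" "HOL-Library.FuncSet"
begin

text \<open>Multivariate polynomials over the ambient semiring 'b: maps from monomials
  (exponent vectors nat =>0 nat) to coefficients.\<close>
type_synonym 'b mpoly = "(nat \<Rightarrow>\<^sub>0 nat) \<Rightarrow>\<^sub>0 'b"

definition subsemiring :: "'b::comm_semiring_1 set \<Rightarrow> bool" where
  "subsemiring A \<longleftrightarrow> 0 \<in> A \<and> 1 \<in> A \<and> (\<forall>x\<in>A. \<forall>y\<in>A. x + y \<in> A \<and> x * y \<in> A)"

text \<open>S = A[x_0,...,x_(n-1)]: coefficients in A, only variables with index < n.\<close>
definition poly_carrier :: "'b::comm_semiring_1 set \<Rightarrow> nat \<Rightarrow> 'b mpoly set" where
  "poly_carrier A n = {p::'b mpoly. \<forall>m::nat \<Rightarrow>\<^sub>0 nat\<in>Poly_Mapping.keys p. Poly_Mapping.lookup p m \<in> A \<and> (\<forall>i\<in>Poly_Mapping.keys m. i < n)}"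

definition const_poly :: "'b::comm_semiring_1 \<Rightarrow> 'b mpoly" where
  "const_poly a = Poly_Mapping.single 0 a"

definition peval :: "'b::comm_semiring_1 list \<Rightarrow> 'b mpoly \<Rightarrow> 'b" where
  "peval P p = (\<Sum>m\<in>Poly_Mapping.keys p. Poly_Mapping.lookup p m * (\<Prod>i\<in>Poly_Mapping.keys m. (P ! i) ^ Poly_Mapping.lookup m i))"

definition is_congruence :: "'a::comm_semiring_1 set \<Rightarrow> ('a \<times> 'a) set \<Rightarrow> bool" where
  "is_congruence C R \<longleftrightarrow> equiv C R \<and>
     (\<forall>(a,b)\<in>R. \<forall>(c,d)\<in>R. (a + c, b + d) \<in> R \<and> (a * c, b * d) \<in> R)"

definition gen_congruence :: "'a::comm_semiring_1 set \<Rightarrow> ('a \<times> 'a) set \<Rightarrow> ('a \<times> 'a) set" where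
  "gen_congruence C T = \<Inter>{R. is_congruence C R \<and> T \<subseteq> R}"

definition zero_set :: "nat \<Rightarrow> ('b::comm_semiring_1 \<times> 'b) set \<Rightarrow> ('b mpoly \<times> 'b mpoly) set \<Rightarrow> 'b list set" where
  "zero_set n \<rho> T = {P. length P = n \<and> (\<forall>(f,g)\<in>T. (peval P f, peval P g) \<in> \<rho>)}"

definition pts_mod :: "'b list set \<Rightarrow> ('b \<times> 'b) set \<Rightarrow> 'b set list set" where
  "pts_mod Y \<rho> = (\<lambda>P. map (\<lambda>c. \<rho> `` {c}) P) ` Y"

definition qadd :: "('a::comm_semiring_1 \<times> 'a) set \<Rightarrow> 'a set \<Rightarrow> 'a set \<Rightarrow> 'a set" where
  "qadd R X Y = R `` {x + y |x y. x \<in> X \<and> y \<in> Y}"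

definition qmul :: "('a::comm_semiring_1 \<times> 'a) set \<Rightarrow> 'a set \<Rightarrow> 'a set \<Rightarrow> 'a set" where
  "qmul R X Y = R `` {x * y |x y. x \<in> X \<and> y \<in> Y}"

definition qsmul :: "('a::comm_semiring_1 \<times> 'a) set \<Rightarrow> 'a \<Rightarrow> 'a set \<Rightarrow> 'a set" where
  "qsmul R c X = R `` {c * x |x. x \<in> X}"

definition alg_hom_quot ::
  "'b::comm_semiring_1 set \<Rightarrow> nat \<Rightarrow> ('b mpoly \<times> 'b mpoly) set \<Rightarrow> ('b \<times> 'b) set
    \<Rightarrow> ('b mpoly set \<Rightarrow> 'b set) set" where
  "alg_hom_quot A n Tc \<rho> = {h.
     h \<in> (poly_carrier A n // Tc) \<rightarrow>\<^sub>E (UNIV // \<rho>) \<and>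
     h (Tc `` {0}) = \<rho> `` {0} \<and> h (Tc `` {1}) = \<rho> `` {1} \<and>
     (\<forall>X\<in>poly_carrier A n // Tc. \<forall>Y\<in>poly_carrier A n // Tc.
        h (qadd Tc X Y) = qadd \<rho> (h X) (h Y) \<and> h (qmul Tc X Y) = qmul \<rho> (h X) (h Y)) \<and>
     (\<forall>a\<in>A. \<forall>X\<in>poly_carrier A n // Tc. h (qsmul Tc (const_poly a) X) = qsmul \<rho> a (h X))}"

definition alg_hom_B ::
  "'b::comm_semiring_1 set \<Rightarrow> nat \<Rightarrow> ('b mpoly \<times> 'b mpoly) set \<Rightarrow> ('b mpoly set \<Rightarrow> 'b) set" where
  "alg_hom_B A n Tc = {h.
     h \<in> (poly_carrier A n // Tc) \<rightarrow>\<^sub>E UNIV \<and>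
     h (Tc `` {0}) = 0 \<and> h (Tc `` {1}) = 1 \<and>
     (\<forall>X\<in>poly_carrier A n // Tc. \<forall>Y\<in>poly_carrier A n // Tc.
        h (qadd Tc X Y) = h X + h Y \<and> h (qmul Tc X Y) = h X * h Y) \<and>
     (\<forall>a\<in>A. \<forall>X\<in>poly_carrier A n // Tc. h (qsmul Tc (const_poly a) X) = a * h X)}"

end

theory Submission
  imports Defs
begin

text \<open>An \<open>A\<close>-algebra homomorphism \<open>S/T\<^sup>c \<rightarrow> B/\<rho>\<close> is determined by the classes it assigns
  to the variables, because \<open>S\<close> is generated as a semiring by the constants and the variables.
  Conversely, a point \<open>P\<close> with \<open>(f(P), g(P)) \<in> \<rho>\<close> for all \<open>(f, g) \<in> T\<close> gives the evaluation map
  \<open>S \<rightarrow> B/\<rho>\<close>, whose kernel is a congruence containing \<open>T\<close>, hence \<open>T\<^sup>c\<close>; so it factors through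
  \<open>S/T\<^sup>c\<close>. Reading off the classes of the variables is therefore a bijection onto \<open>Z\<^sub>\<rho>(T)(B)/\<rho>\<close>.
  For \<open>\<rho> = id\<^sub>B\<close> all classes are singletons, which identifies \<open>B/\<rho>\<close> with \<open>B\<close> and
  \<open>Z/\<rho>\<close> with \<open>Z\<close>.\<close>

section \<open>Polynomials and their evaluation\<close>

lemma poly_mapping_sum_single:
  fixes p :: "'a \<Rightarrow>\<^sub>0 'c::comm_monoid_add"
  shows "p = (\<Sum>m\<in>Poly_Mapping.keys p. Poly_Mapping.single m (Poly_Mapping.lookup p m))"
  by (rule poly_mapping_eqI) (simp add: lookup_sum lookup_single when_def in_keys_iff)

definition var_poly :: "nat \<Rightarrow> 'b::comm_semiring_1 mpoly" where
  "var_poly i = Poly_Mapping.single (Poly_Mapping.single i 1) 1"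

lemma var_poly_power: "var_poly i ^ k = Poly_Mapping.single (Poly_Mapping.single i k) 1"
  by (induction k) (simp_all add: var_poly_def mult_single single_add[symmetric] add.commute)

lemma prod_single_one:
  "(\<Prod>i\<in>I. Poly_Mapping.single (g i) (1::'b::comm_semiring_1)) = Poly_Mapping.single (\<Sum>i\<in>I. g i) 1"
  by (induction I rule: infinite_finite_induct) (simp_all add: mult_single)

lemma single_eq_const_times_monomial:
  fixes c :: "'b::comm_semiring_1"
  shows "Poly_Mapping.single m c =
     const_poly c * (\<Prod>i\<in>Poly_Mapping.keys m. var_poly i ^ Poly_Mapping.lookup m i)"
proof -
  have "(\<Prod>i\<in>Poly_Mapping.keys m. var_poly i ^ Poly_Mapping.lookup m i) = Poly_Mapping.single m (1::'b)"
    by (simp only: var_poly_power prod_single_one flip: poly_mapping_sum_single)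
  then show ?thesis
    by (simp add: const_poly_def mult_single)
qed

definition monomial_value :: "'b::comm_semiring_1 list \<Rightarrow> (nat \<Rightarrow>\<^sub>0 nat) \<Rightarrow> 'b" where
  "monomial_value P m = (\<Prod>i\<in>Poly_Mapping.keys m. (P ! i) ^ Poly_Mapping.lookup m i)"

lemma monomial_value_superset:
  assumes "finite K" "Poly_Mapping.keys m \<subseteq> K"
  shows "monomial_value P m = (\<Prod>i\<in>K. (P ! i) ^ Poly_Mapping.lookup m i)"
  unfolding monomial_value_def
  by (rule prod.mono_neutral_left) (use assms in \<open>auto simp: in_keys_iff\<close>)

lemma monomial_value_add: "monomial_value P (a + b) = monomial_value P a * monomial_value P b"
proof -
  let ?K = "Poly_Mapping.keys a \<union> Poly_Mapping.keys b"
  have "monomial_value P (a + b) = (\<Prod>i\<in>?K. (P ! i) ^ Poly_Mapping.lookup (a + b) i)"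
    by (rule monomial_value_superset) (auto dest: keys_add[THEN subsetD])
  also have "\<dots> = monomial_value P a * monomial_value P b"
    by (simp add: lookup_add power_add prod.distrib monomial_value_superset[of ?K])
  finally show ?thesis .
qed

lemma peval_eq_sum_monomial_value:
  assumes "finite K" "Poly_Mapping.keys p \<subseteq> K"
  shows "peval P p = (\<Sum>m\<in>K. Poly_Mapping.lookup p m * monomial_value P m)"
  unfolding peval_def monomial_value_def[symmetric]
  by (rule sum.mono_neutral_left) (use assms in \<open>auto simp: in_keys_iff\<close>)

lemma peval_add: "peval P (p + q) = peval P p + peval P q"
proof -
  let ?K = "Poly_Mapping.keys p \<union> Poly_Mapping.keys q"
  have "peval P (p + q) = (\<Sum>m\<in>?K. Poly_Mapping.lookup (p + q) m * monomial_value P m)"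
    by (rule peval_eq_sum_monomial_value) (auto dest: keys_add[THEN subsetD])
  also have "\<dots> = peval P p + peval P q"
    by (simp add: lookup_add distrib_right sum.distrib peval_eq_sum_monomial_value[of ?K])
  finally show ?thesis .
qed

lemma peval_zero [simp]: "peval P 0 = 0"
  by (simp add: peval_def)

lemma peval_sum: "peval P (sum f I) = (\<Sum>i\<in>I. peval P (f i))"
  by (induction I rule: infinite_finite_induct) (simp_all add: peval_add)

lemma peval_single: "peval P (Poly_Mapping.single m c) = c * monomial_value P m"
  by (simp add: peval_def monomial_value_def)

lemma peval_mult: "peval P (p * q) = peval P p * peval P q"
proof -
  let ?sp = "\<lambda>m. Poly_Mapping.single m (Poly_Mapping.lookup p m)"
  let ?sq = "\<lambda>m. Poly_Mapping.single m (Poly_Mapping.lookup q m)"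
  have "p * q = (\<Sum>a\<in>Poly_Mapping.keys p. \<Sum>b\<in>Poly_Mapping.keys q. ?sp a * ?sq b)"
    by (subst (1 2) poly_mapping_sum_single) (simp add: sum_product)
  then have "peval P (p * q) = (\<Sum>a\<in>Poly_Mapping.keys p. \<Sum>b\<in>Poly_Mapping.keys q.
      (Poly_Mapping.lookup p a * monomial_value P a) * (Poly_Mapping.lookup q b * monomial_value P b))"
    by (simp add: peval_sum mult_single peval_single monomial_value_add ac_simps)
  also have "\<dots> = peval P p * peval P q"
    by (simp add: peval_def monomial_value_def sum_product)
  finally show ?thesis .
qed

lemma peval_const [simp]: "peval P (const_poly a) = a"
  by (simp add: const_poly_def peval_single monomial_value_def)

lemma peval_one [simp]: "peval P 1 = 1"
  using peval_const[of P 1] by (simp add: const_poly_def)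

lemma peval_var_poly [simp]: "peval P (var_poly i) = P ! i"
  by (simp add: var_poly_def peval_single monomial_value_def)

section \<open>Polynomials with coefficients in a subsemiring\<close>

lemma subsemiring_sum: "subsemiring S \<Longrightarrow> (\<And>i. i \<in> I \<Longrightarrow> f i \<in> S) \<Longrightarrow> sum f I \<in> S"
  by (induction I rule: infinite_finite_induct) (auto simp: subsemiring_def)

lemma subsemiring_prod: "subsemiring S \<Longrightarrow> (\<And>i. i \<in> I \<Longrightarrow> f i \<in> S) \<Longrightarrow> prod f I \<in> S"
  by (induction I rule: infinite_finite_induct) (auto simp: subsemiring_def)

lemma subsemiring_power: "subsemiring S \<Longrightarrow> x \<in> S \<Longrightarrow> x ^ k \<in> S"
  by (induction k) (auto simp: subsemiring_def)

lemma poly_carrier_iff: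
  assumes "subsemiring A"
  shows "p \<in> poly_carrier A n \<longleftrightarrow>
    (\<forall>m. Poly_Mapping.lookup p m \<in> A) \<and> (\<forall>m\<in>Poly_Mapping.keys p. \<forall>i\<in>Poly_Mapping.keys m. i < n)"
  using assms unfolding poly_carrier_def subsemiring_def by (auto simp: in_keys_iff)

lemma single_in_poly_carrier:
  assumes "subsemiring A" "c \<in> A" "\<forall>i\<in>Poly_Mapping.keys m. i < n"
  shows "Poly_Mapping.single m c \<in> poly_carrier A n"
  using assms by (auto simp: poly_carrier_iff lookup_single when_def subsemiring_def)

lemma const_poly_in_poly_carrier: "subsemiring A \<Longrightarrow> a \<in> A \<Longrightarrow> const_poly a \<in> poly_carrier A n"
  unfolding const_poly_def by (rule single_in_poly_carrier) auto

lemma var_poly_in_poly_carrier: "subsemiring A \<Longrightarrow> i < n \<Longrightarrow> var_poly i \<in> poly_carrier A n"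
  unfolding var_poly_def by (rule single_in_poly_carrier) (auto simp: subsemiring_def)

lemma poly_carrier_add:
  assumes "subsemiring A" "p \<in> poly_carrier A n" "q \<in> poly_carrier A n"
  shows "p + q \<in> poly_carrier A n"
  using assms keys_add[of p q] by (auto simp: poly_carrier_iff lookup_add subsemiring_def)

lemma zero_in_poly_carrier: "0 \<in> poly_carrier A n"
  by (simp add: poly_carrier_def)

lemma poly_carrier_sum:
  assumes "subsemiring A" "\<And>i. i \<in> I \<Longrightarrow> f i \<in> poly_carrier A n"
  shows "sum f I \<in> poly_carrier A n"
  using assms
  by (induction I rule: infinite_finite_induct) (simp_all add: zero_in_poly_carrier poly_carrier_add)

lemma poly_carrier_mult:
  assumes A: "subsemiring A" and p: "p \<in> poly_carrier A n" and q: "q \<in> poly_carrier A n"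
  shows "p * q \<in> poly_carrier A n"
proof -
  have "Poly_Mapping.single a (Poly_Mapping.lookup p a) * Poly_Mapping.single b (Poly_Mapping.lookup q b)
      \<in> poly_carrier A n" if "a \<in> Poly_Mapping.keys p" "b \<in> Poly_Mapping.keys q" for a b
    unfolding mult_single using that p q A keys_add[of a b]
    by (intro single_in_poly_carrier) (auto simp: poly_carrier_iff subsemiring_def)
  then show ?thesis
    by (subst (1 2) poly_mapping_sum_single)
       (simp add: sum_product poly_carrier_sum[OF A])
qed

lemma subsemiring_poly_carrier:
  assumes "subsemiring A"
  shows "subsemiring (poly_carrier A n)"
proof -
  have "1 \<in> poly_carrier A n"
    using const_poly_in_poly_carrier[OF assms, of 1] assms by (simp add: const_poly_def subsemiring_def)
  then show ?thesis
    using assms zero_in_poly_carrier poly_carrier_add poly_carrier_mult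
    unfolding subsemiring_def[of "poly_carrier A n"] by blast
qed

lemma poly_carrier_subset_subsemiring:
  assumes A: "subsemiring A" and S: "subsemiring S"
    and const: "const_poly ` A \<subseteq> S" and var: "var_poly ` {..<n} \<subseteq> S"
  shows "poly_carrier A n \<subseteq> S"
proof
  fix p assume p: "p \<in> poly_carrier A n"
  have "Poly_Mapping.single m (Poly_Mapping.lookup p m) \<in> S" if m: "m \<in> Poly_Mapping.keys p" for m
  proof -
    have c: "const_poly (Poly_Mapping.lookup p m) \<in> S"
      using const p A unfolding poly_carrier_iff[OF A] by blast
    have "var_poly i ^ Poly_Mapping.lookup m i \<in> S" if "i \<in> Poly_Mapping.keys m" for i
    proof (rule subsemiring_power[OF S])
      show "var_poly i \<in> S" using var p m that unfolding poly_carrier_iff[OF A] by blast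
    qed
    then have "(\<Prod>i\<in>Poly_Mapping.keys m. var_poly i ^ Poly_Mapping.lookup m i) \<in> S"
      by (rule subsemiring_prod[OF S])
    with c S have "const_poly (Poly_Mapping.lookup p m) *
        (\<Prod>i\<in>Poly_Mapping.keys m. var_poly i ^ Poly_Mapping.lookup m i) \<in> S"
      unfolding subsemiring_def by blast
    then show ?thesis
      by (simp only: single_eq_const_times_monomial[symmetric])
  qed
  then have "(\<Sum>m\<in>Poly_Mapping.keys p. Poly_Mapping.single m (Poly_Mapping.lookup p m)) \<in> S"
    by (rule subsemiring_sum[OF S])
  then show "p \<in> S"
    by (simp only: poly_mapping_sum_single[symmetric])
qed

section \<open>Congruences and their quotients\<close>

lemma is_congruence_equiv: "is_congruence C R \<Longrightarrow> equiv C R"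
  unfolding is_congruence_def by blast

lemma is_congruence_refl: "is_congruence C R \<Longrightarrow> x \<in> C \<Longrightarrow> (x, x) \<in> R"
  unfolding is_congruence_def equiv_def refl_on_def by blast

lemma is_congruence_add: "is_congruence C R \<Longrightarrow> (a, b) \<in> R \<Longrightarrow> (c, d) \<in> R \<Longrightarrow> (a + c, b + d) \<in> R"
  unfolding is_congruence_def by blast

lemma is_congruence_mult: "is_congruence C R \<Longrightarrow> (a, b) \<in> R \<Longrightarrow> (c, d) \<in> R \<Longrightarrow> (a * c, b * d) \<in> R"
  unfolding is_congruence_def by blast

lemma Image_eq_equiv_class:
  assumes "equiv C R" "S \<subseteq> R `` {z}" "z \<in> S"
  shows "R `` S = R `` {z}"
proof
  show "R `` S \<subseteq> R `` {z}"
    using assms(1,2) by (auto elim!: equivE dest: transD)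
  show "R `` {z} \<subseteq> R `` S"
    using assms(3) by auto
qed

lemma qadd_class:
  assumes R: "is_congruence C R" and "x \<in> C" "y \<in> C"
  shows "qadd R (R `` {x}) (R `` {y}) = R `` {x + y}"
  unfolding qadd_def
  using assms is_congruence_refl[OF R] is_congruence_add[OF R]
  by (intro Image_eq_equiv_class[OF is_congruence_equiv[OF R]]) auto

lemma qmul_class:
  assumes R: "is_congruence C R" and "x \<in> C" "y \<in> C"
  shows "qmul R (R `` {x}) (R `` {y}) = R `` {x * y}"
  unfolding qmul_def
  using assms is_congruence_refl[OF R] is_congruence_mult[OF R]
  by (intro Image_eq_equiv_class[OF is_congruence_equiv[OF R]]) auto

lemma qsmul_class:
  assumes R: "is_congruence C R" and "c \<in> C" "x \<in> C"
  shows "qsmul R c (R `` {x}) = R `` {c * x}"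
  unfolding qsmul_def
  using assms is_congruence_refl[OF R] is_congruence_mult[OF R]
  by (intro Image_eq_equiv_class[OF is_congruence_equiv[OF R]]) auto

lemma quotient_closed_qadd_qmul:
  assumes C: "subsemiring C" and R: "is_congruence C R"
    and X: "X \<in> C // R" and Y: "Y \<in> C // R"
  shows "qadd R X Y \<in> C // R" "qmul R X Y \<in> C // R"
proof -
  obtain x y where "x \<in> C" "y \<in> C" "X = R `` {x}" "Y = R `` {y}"
    using X Y by (auto elim!: quotientE)
  then show "qadd R X Y \<in> C // R" "qmul R X Y \<in> C // R"
    using C qadd_class[OF R] qmul_class[OF R] by (auto simp: subsemiring_def intro: quotientI)
qed

lemma quotient_closed_qsmul:
  assumes C: "subsemiring C" and R: "is_congruence C R"
    and c: "c \<in> C" and X: "X \<in> C // R"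
  shows "qsmul R c X \<in> C // R"
proof -
  obtain x where "x \<in> C" "X = R `` {x}"
    using X by (auto elim!: quotientE)
  then show ?thesis
    using C c qsmul_class[OF R c] by (auto simp: subsemiring_def intro: quotientI)
qed

lemma is_congruence_Inter:
  assumes F: "F \<noteq> {}" and cong: "\<And>R. R \<in> F \<Longrightarrow> is_congruence C R"
  shows "is_congruence C (\<Inter>F)"
proof -
  have equiv: "equiv C R" if "R \<in> F" for R
    using cong[OF that] by (rule is_congruence_equiv)
  have "\<Inter>F \<subseteq> C \<times> C"
    using F equiv unfolding equiv_def by blast
  moreover have "refl_on C (\<Inter>F)"
    using F equiv unfolding equiv_def refl_on_def by blast
  moreover have "sym (\<Inter>F)"
    using equiv unfolding equiv_def sym_def by blast
  moreover have "trans (\<Inter>F)"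
    using equiv unfolding equiv_def trans_def by blast
  moreover have "(a + c, b + d) \<in> \<Inter>F \<and> (a * c, b * d) \<in> \<Inter>F"
    if "(a, b) \<in> \<Inter>F" "(c, d) \<in> \<Inter>F" for a b c d
    using that cong is_congruence_add is_congruence_mult by blast
  ultimately show ?thesis
    unfolding is_congruence_def equiv_def by auto
qed

lemma is_congruence_gen_congruence:
  assumes C: "subsemiring C" and T: "T \<subseteq> C \<times> C"
  shows "is_congruence C (gen_congruence C T)"
  unfolding gen_congruence_def
proof (rule is_congruence_Inter)
  have "is_congruence C (C \<times> C)"
    using C unfolding is_congruence_def equiv_def refl_on_def sym_def trans_def subsemiring_def
    by auto
  with T show "{R. is_congruence C R \<and> T \<subseteq> R} \<noteq> {}" by blast
qed blast

lemma gen_congruence_superset: "T \<subseteq> gen_congruence C T"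
  unfolding gen_congruence_def by blast

lemma gen_congruence_least: "is_congruence C R \<Longrightarrow> T \<subseteq> R \<Longrightarrow> gen_congruence C T \<subseteq> R"
  unfolding gen_congruence_def by blast

section \<open>Homomorphisms out of \<open>S/T\<^sup>c\<close>\<close>

definition eval_kernel ::
  "'b::comm_semiring_1 mpoly set \<Rightarrow> ('b \<times> 'b) set \<Rightarrow> 'b list \<Rightarrow> ('b mpoly \<times> 'b mpoly) set" where
  "eval_kernel C \<rho> P = {(f, g). f \<in> C \<and> g \<in> C \<and> (peval P f, peval P g) \<in> \<rho>}"

lemma is_congruence_eval_kernel:
  assumes C: "subsemiring C" and \<rho>: "is_congruence UNIV \<rho>"
  shows "is_congruence C (eval_kernel C \<rho> P)"
proof -
  have "equiv C (eval_kernel C \<rho> P)"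
    using is_congruence_equiv[OF \<rho>]
    unfolding eval_kernel_def equiv_def refl_on_def sym_def trans_def by blast
  moreover have "(a + c, b + d) \<in> eval_kernel C \<rho> P \<and> (a * c, b * d) \<in> eval_kernel C \<rho> P"
    if "(a, b) \<in> eval_kernel C \<rho> P" "(c, d) \<in> eval_kernel C \<rho> P" for a b c d
    using that C is_congruence_add[OF \<rho>] is_congruence_mult[OF \<rho>]
    by (auto simp: eval_kernel_def subsemiring_def peval_add peval_mult)
  ultimately show ?thesis
    unfolding is_congruence_def by blast
qed

lemma gen_congruence_subset_eval_kernel:
  assumes A: "subsemiring A" and \<rho>: "is_congruence UNIV \<rho>"
    and T: "T \<subseteq> poly_carrier A n \<times> poly_carrier A n" and P: "P \<in> zero_set n \<rho> T"
  shows "gen_congruence (poly_carrier A n) T \<subseteq> eval_kernel (poly_carrier A n) \<rho> P"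
proof (rule gen_congruence_least)
  show "is_congruence (poly_carrier A n) (eval_kernel (poly_carrier A n) \<rho> P)"
    using subsemiring_poly_carrier[OF A] \<rho> by (rule is_congruence_eval_kernel)
  show "T \<subseteq> eval_kernel (poly_carrier A n) \<rho> P"
    using T P by (auto simp: eval_kernel_def zero_set_def)
qed

text \<open>No representatives are chosen: once \<open>Tc\<close> lies in the kernel of evaluation at \<open>P\<close>, the
  values on a class of \<open>Tc\<close> lie in a single \<open>\<rho>\<close>-class.\<close>

definition quot_eval ::
  "'b::comm_semiring_1 set \<Rightarrow> nat \<Rightarrow> ('b mpoly \<times> 'b mpoly) set \<Rightarrow> ('b \<times> 'b) set \<Rightarrow> 'b list
    \<Rightarrow> 'b mpoly set \<Rightarrow> 'b set" where
  "quot_eval A n Tc \<rho> P = restrict (\<lambda>X. \<rho> `` (peval P ` X)) (poly_carrier A n // Tc)"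

lemma quot_eval_class:
  assumes Tc: "is_congruence (poly_carrier A n) Tc" and ker: "Tc \<subseteq> eval_kernel (poly_carrier A n) \<rho> P"
    and \<rho>: "is_congruence UNIV \<rho>" and f: "f \<in> poly_carrier A n"
  shows "quot_eval A n Tc \<rho> P (Tc `` {f}) = \<rho> `` {peval P f}"
proof -
  have "\<rho> `` (peval P ` (Tc `` {f})) = \<rho> `` {peval P f}"
    using ker is_congruence_refl[OF Tc f]
    by (intro Image_eq_equiv_class[OF is_congruence_equiv[OF \<rho>]]) (auto simp: eval_kernel_def)
  then show ?thesis
    using f by (simp add: quot_eval_def quotientI)
qed

lemma quot_eval_in_alg_hom_quot:
  assumes A: "subsemiring A" and \<rho>: "is_congruence UNIV \<rho>"
    and Tc: "is_congruence (poly_carrier A n) Tc" and ker: "Tc \<subseteq> eval_kernel (poly_carrier A n) \<rho> P"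
  shows "quot_eval A n Tc \<rho> P \<in> alg_hom_quot A n Tc \<rho>"
proof -
  let ?C = "poly_carrier A n" and ?h = "quot_eval A n Tc \<rho> P"
  have C: "subsemiring ?C" by (rule subsemiring_poly_carrier[OF A])
  have h: "?h (Tc `` {f}) = \<rho> `` {peval P f}" if "f \<in> ?C" for f
    using Tc ker \<rho> that by (rule quot_eval_class)
  have "?h X \<in> UNIV // \<rho>" if "X \<in> ?C // Tc" for X
    using that h by (auto elim!: quotientE intro!: quotientI)
  then have "?h \<in> ?C // Tc \<rightarrow>\<^sub>E UNIV // \<rho>"
    by (auto simp: quot_eval_def)
  moreover have "?h (qadd Tc X Y) = qadd \<rho> (?h X) (?h Y) \<and> ?h (qmul Tc X Y) = qmul \<rho> (?h X) (?h Y)"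
    if "X \<in> ?C // Tc" "Y \<in> ?C // Tc" for X Y
    using that C
    by (auto elim!: quotientE simp: qadd_class[OF Tc] qmul_class[OF Tc] qadd_class[OF \<rho>]
        qmul_class[OF \<rho>] h subsemiring_def peval_add peval_mult)
  moreover have "?h (qsmul Tc (const_poly a) X) = qsmul \<rho> a (?h X)" if "a \<in> A" "X \<in> ?C // Tc" for a X
    using that C const_poly_in_poly_carrier[OF A]
    by (auto elim!: quotientE simp: qsmul_class[OF Tc] qsmul_class[OF \<rho>] h subsemiring_def
        peval_mult)
  moreover have "0 \<in> ?C" "1 \<in> ?C"
    using C by (auto simp: subsemiring_def)
  ultimately show ?thesis
    unfolding alg_hom_quot_def by (simp add: h)
qed

lemma alg_hom_quot_class_eq:
  assumes A: "subsemiring A" and \<rho>: "is_congruence UNIV \<rho>"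
    and Tc: "is_congruence (poly_carrier A n) Tc" and h: "h \<in> alg_hom_quot A n Tc \<rho>"
    and var: "\<And>i. i < n \<Longrightarrow> h (Tc `` {var_poly i}) = \<rho> `` {P ! i}"
    and f: "f \<in> poly_carrier A n"
  shows "h (Tc `` {f}) = \<rho> `` {peval P f}"
proof -
  let ?C = "poly_carrier A n"
  let ?S = "{f \<in> ?C. h (Tc `` {f}) = \<rho> `` {peval P f}}"
  have C: "subsemiring ?C" by (rule subsemiring_poly_carrier[OF A])
  have cls: "Tc `` {x} \<in> ?C // Tc" if "x \<in> ?C" for x
    using that by (rule quotientI)
  note hom = h[unfolded alg_hom_quot_def, simplified]
  have "subsemiring ?S"
    unfolding subsemiring_def[of ?S]
  proof (intro conjI ballI)
    show "0 \<in> ?S" "1 \<in> ?S"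
      using C hom by (auto simp: subsemiring_def)
  next
    fix f g assume f: "f \<in> ?S" and g: "g \<in> ?S"
    then have fg: "f + g \<in> ?C" "f * g \<in> ?C"
      using C by (auto simp: subsemiring_def)
    have "h (Tc `` {f + g}) = \<rho> `` {peval P (f + g)}"
      using hom f g cls qadd_class[OF Tc, of f g, symmetric] qadd_class[OF \<rho>]
      by (simp add: peval_add)
    moreover have "h (Tc `` {f * g}) = \<rho> `` {peval P (f * g)}"
      using hom f g cls qmul_class[OF Tc, of f g, symmetric] qmul_class[OF \<rho>]
      by (simp add: peval_mult)
    ultimately show "f + g \<in> ?S" "f * g \<in> ?S"
      using fg by simp_all
  qed
  moreover have "const_poly ` A \<subseteq> ?S"
  proof (rule image_subsetI)
    fix a assume a: "a \<in> A"
    have one: "1 \<in> ?C" and ca: "const_poly a \<in> ?C"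
      using C const_poly_in_poly_carrier[OF A a] by (auto simp: subsemiring_def)
    have "h (Tc `` {const_poly a * 1}) = \<rho> `` {a * 1}"
      using hom a cls[OF one] qsmul_class[OF Tc ca one, symmetric] qsmul_class[OF \<rho>, of a 1]
      by simp
    then show "const_poly a \<in> ?S"
      using ca by simp
  qed
  moreover have "var_poly ` {..<n} \<subseteq> ?S"
  proof (rule image_subsetI)
    fix i assume "i \<in> {..<n}"
    then have "i < n" by simp
    then show "var_poly i \<in> ?S"
      using var var_poly_in_poly_carrier[OF A] by simp
  qed
  ultimately have "poly_carrier A n \<subseteq> ?S"
    by (rule poly_carrier_subset_subsemiring[OF A])
  with f show ?thesis by blast
qed

lemma alg_hom_quot_var_classes:
  assumes A: "subsemiring A" and h: "h \<in> alg_hom_quot A n Tc \<rho>"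
  obtains P where "length P = n" "\<And>i. i < n \<Longrightarrow> h (Tc `` {var_poly i}) = \<rho> `` {P ! i}"
proof
  have "h (Tc `` {var_poly i}) \<in> UNIV // \<rho>" if "i < n" for i
    using h var_poly_in_poly_carrier[OF A that] unfolding alg_hom_quot_def by (blast intro: quotientI)
  then have ex: "\<exists>c. h (Tc `` {var_poly i}) = \<rho> `` {c}" if "i < n" for i
    using that by (auto elim!: quotientE)
  then show "h (Tc `` {var_poly i}) = \<rho> `` {map (\<lambda>i. SOME c. h (Tc `` {var_poly i}) = \<rho> `` {c}) [0..<n] ! i}"
    if "i < n" for i
    using someI_ex[OF ex[OF that]] that by simp
qed simp

lemma alg_hom_quot_eqI:
  assumes A: "subsemiring A" and \<rho>: "is_congruence UNIV \<rho>"
    and Tc: "is_congruence (poly_carrier A n) Tc"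
    and h1: "h1 \<in> alg_hom_quot A n Tc \<rho>" and h2: "h2 \<in> alg_hom_quot A n Tc \<rho>"
    and var: "\<And>i. i < n \<Longrightarrow> h1 (Tc `` {var_poly i}) = h2 (Tc `` {var_poly i})"
  shows "h1 = h2"
proof (rule extensionalityI[where A = "poly_carrier A n // Tc"])
  show "h1 \<in> extensional (poly_carrier A n // Tc)" "h2 \<in> extensional (poly_carrier A n // Tc)"
    using h1 h2 by (auto simp: alg_hom_quot_def PiE_def)
  obtain P where P: "\<And>i. i < n \<Longrightarrow> h1 (Tc `` {var_poly i}) = \<rho> `` {P ! i}"
    using alg_hom_quot_var_classes[OF A h1] by blast
  fix X assume "X \<in> poly_carrier A n // Tc"
  then obtain f where "f \<in> poly_carrier A n" "X = Tc `` {f}"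
    by (auto elim: quotientE)
  moreover have "h2 (Tc `` {var_poly i}) = \<rho> `` {P ! i}" if "i < n" for i
    using P var that by simp
  ultimately show "h1 X = h2 X"
    using alg_hom_quot_class_eq[OF A \<rho> Tc h1 P] alg_hom_quot_class_eq[OF A \<rho> Tc h2] by simp
qed

lemma alg_hom_quot_var_classes_in_zero_set:
  assumes A: "subsemiring A" and \<rho>: "is_congruence UNIV \<rho>"
    and Tc: "is_congruence (poly_carrier A n) Tc" and T: "T \<subseteq> Tc"
    and h: "h \<in> alg_hom_quot A n Tc \<rho>"
    and P: "length P = n" "\<And>i. i < n \<Longrightarrow> h (Tc `` {var_poly i}) = \<rho> `` {P ! i}"
  shows "P \<in> zero_set n \<rho> T"
  unfolding zero_set_def
proof (intro CollectI conjI P(1) ballI, clarify)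
  fix f g assume "(f, g) \<in> T"
  then have fg: "(f, g) \<in> Tc" "f \<in> poly_carrier A n" "g \<in> poly_carrier A n"
    using T Tc by (auto simp: is_congruence_def equiv_def)
  then have "\<rho> `` {peval P f} = \<rho> `` {peval P g}"
    using alg_hom_quot_class_eq[OF A \<rho> Tc h P(2)] equiv_class_eq[OF is_congruence_equiv[OF Tc]]
    by metis
  then show "(peval P f, peval P g) \<in> \<rho>"
    using eq_equiv_class_iff[OF is_congruence_equiv[OF \<rho>]] by blast
qed

definition var_classes ::
  "nat \<Rightarrow> ('b::comm_semiring_1 mpoly \<times> 'b mpoly) set \<Rightarrow> ('b mpoly set \<Rightarrow> 'b set) \<Rightarrow> 'b set list" where
  "var_classes n Tc h = map (\<lambda>i. h (Tc `` {var_poly i})) [0..<n]"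

lemma nth_var_classes: "i < n \<Longrightarrow> var_classes n Tc h ! i = h (Tc `` {var_poly i})"
  by (simp add: var_classes_def)

lemma var_classes_eq_map:
  assumes "length P = n" "\<And>i. i < n \<Longrightarrow> h (Tc `` {var_poly i}) = \<rho> `` {P ! i}"
  shows "var_classes n Tc h = map (\<lambda>c. \<rho> `` {c}) P"
  using assms by (intro nth_equalityI) (simp_all add: var_classes_def)

lemma bij_betw_var_classes:
  assumes A: "subsemiring A" and \<rho>: "is_congruence UNIV \<rho>"
    and T: "T \<subseteq> poly_carrier A n \<times> poly_carrier A n"
  defines "Tc \<equiv> gen_congruence (poly_carrier A n) T"
  shows "bij_betw (var_classes n Tc) (alg_hom_quot A n Tc \<rho>) (pts_mod (zero_set n \<rho> T) \<rho>)"
proof -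
  have Tc: "is_congruence (poly_carrier A n) Tc"
    unfolding Tc_def using subsemiring_poly_carrier[OF A] T by (rule is_congruence_gen_congruence)
  have TTc: "T \<subseteq> Tc"
    unfolding Tc_def by (rule gen_congruence_superset)
  have "inj_on (var_classes n Tc) (alg_hom_quot A n Tc \<rho>)"
  proof (rule inj_onI)
    fix h1 h2 assume h1: "h1 \<in> alg_hom_quot A n Tc \<rho>" and h2: "h2 \<in> alg_hom_quot A n Tc \<rho>"
      and "var_classes n Tc h1 = var_classes n Tc h2"
    then have "h1 (Tc `` {var_poly i}) = h2 (Tc `` {var_poly i})" if "i < n" for i
      using that by (metis nth_var_classes)
    then show "h1 = h2"
      by (rule alg_hom_quot_eqI[OF A \<rho> Tc h1 h2])
  qed
  moreover have "var_classes n Tc h \<in> pts_mod (zero_set n \<rho> T) \<rho>"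
    if h: "h \<in> alg_hom_quot A n Tc \<rho>" for h
  proof -
    obtain P where P: "length P = n" "\<And>i. i < n \<Longrightarrow> h (Tc `` {var_poly i}) = \<rho> `` {P ! i}"
      using alg_hom_quot_var_classes[OF A h] by blast
    then have "P \<in> zero_set n \<rho> T"
      by (rule alg_hom_quot_var_classes_in_zero_set[OF A \<rho> Tc TTc h])
    with var_classes_eq_map[OF P] show ?thesis
      unfolding pts_mod_def by blast
  qed
  moreover have "map (\<lambda>c. \<rho> `` {c}) P \<in> var_classes n Tc ` alg_hom_quot A n Tc \<rho>"
    if P: "P \<in> zero_set n \<rho> T" for P
  proof -
    have ker: "Tc \<subseteq> eval_kernel (poly_carrier A n) \<rho> P"
      unfolding Tc_def using A \<rho> T P by (rule gen_congruence_subset_eval_kernel)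
    have "quot_eval A n Tc \<rho> P (Tc `` {var_poly i}) = \<rho> `` {P ! i}" if "i < n" for i
      using quot_eval_class[OF Tc ker \<rho> var_poly_in_poly_carrier[OF A that]] by simp
    then have "var_classes n Tc (quot_eval A n Tc \<rho> P) = map (\<lambda>c. \<rho> `` {c}) P"
      using P by (intro var_classes_eq_map) (simp_all add: zero_set_def)
    then show ?thesis
      using quot_eval_in_alg_hom_quot[OF A \<rho> Tc ker] by (metis image_eqI)
  qed
  ultimately show ?thesis
    unfolding bij_betw_def pts_mod_def by blast
qed

section \<open>The trivial congruence\<close>

lemma qadd_Id_singleton [simp]: "qadd Id {a} {b} = {a + b}"
  by (simp add: qadd_def)

lemma qmul_Id_singleton [simp]: "qmul Id {a} {b} = {a * b}"
  by (simp add: qmul_def)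

lemma qsmul_Id_singleton [simp]: "qsmul Id a {b} = {a * b}"
  by (simp add: qsmul_def)

lemma quotient_Id_iff: "X \<in> UNIV // Id \<longleftrightarrow> (\<exists>c. X = {c})"
  unfolding quotient_def by auto

lemma singleton_hom_in_alg_hom_quot_Id_iff:
  assumes A: "subsemiring A" and Tc: "is_congruence (poly_carrier A n) Tc"
    and k: "k \<in> extensional (poly_carrier A n // Tc)"
  shows "restrict (\<lambda>X. {k X}) (poly_carrier A n // Tc) \<in> alg_hom_quot A n Tc Id
    \<longleftrightarrow> k \<in> alg_hom_B A n Tc"
proof -
  let ?Q = "poly_carrier A n // Tc"
  have C: "subsemiring (poly_carrier A n)"
    by (rule subsemiring_poly_carrier[OF A])
  have closed: "qadd Tc X Y \<in> ?Q" "qmul Tc X Y \<in> ?Q" if "X \<in> ?Q" "Y \<in> ?Q" for X Y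
    using quotient_closed_qadd_qmul[OF C Tc that] by simp_all
  have closed_smul: "qsmul Tc (const_poly a) X \<in> ?Q" if "a \<in> A" "X \<in> ?Q" for a X
    using quotient_closed_qsmul[OF C Tc const_poly_in_poly_carrier[OF A that(1)] that(2)] .
  have units: "Tc `` {0} \<in> ?Q" "Tc `` {1} \<in> ?Q"
    using C by (auto simp: subsemiring_def intro: quotientI)
  show ?thesis
    unfolding alg_hom_quot_def alg_hom_B_def
    using k units closed closed_smul by (auto simp: quotient_Id_iff PiE_def)
qed

lemma bij_betw_alg_hom_B_alg_hom_quot_Id:
  assumes A: "subsemiring A" and Tc: "is_congruence (poly_carrier A n) Tc"
  shows "bij_betw (\<lambda>k. restrict (\<lambda>X. {k X}) (poly_carrier A n // Tc))
           (alg_hom_B A n Tc) (alg_hom_quot A n Tc Id)"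
proof -
  let ?Q = "poly_carrier A n // Tc"
  let ?G = "\<lambda>k. restrict (\<lambda>X. {k X}) ?Q"
  have ext: "k \<in> extensional ?Q" if "k \<in> alg_hom_B A n Tc" for k
    using that by (auto simp: alg_hom_B_def PiE_def)
  have "inj_on ?G (alg_hom_B A n Tc)"
  proof (rule inj_onI)
    fix k1 k2 assume k: "k1 \<in> alg_hom_B A n Tc" "k2 \<in> alg_hom_B A n Tc" and eq: "?G k1 = ?G k2"
    show "k1 = k2"
    proof (rule extensionalityI[where A = ?Q])
      show "k1 X = k2 X" if "X \<in> ?Q" for X
        using fun_cong[OF eq, of X] that by simp
    qed (use k ext in blast)+
  qed
  moreover have "h \<in> ?G ` alg_hom_B A n Tc" if h: "h \<in> alg_hom_quot A n Tc Id" for h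
  proof -
    define k where "k = restrict (\<lambda>X. the_elem (h X)) ?Q"
    have hPi: "h \<in> ?Q \<rightarrow>\<^sub>E UNIV // Id"
      using h unfolding alg_hom_quot_def mem_Collect_eq by (rule conjunct1)
    have "h X = {k X}" if X: "X \<in> ?Q" for X
    proof -
      obtain c where "h X = {c}"
        using PiE_mem[OF hPi X] unfolding quotient_Id_iff by blast
      then show ?thesis
        using X by (simp add: k_def)
    qed
    then have hk: "?G k = h"
      using hPi by (intro extensionalityI[where A = ?Q]) (auto simp: PiE_def)
    have "k \<in> alg_hom_B A n Tc"
      using singleton_hom_in_alg_hom_quot_Id_iff[OF A Tc, of k] h hk by (simp add: k_def)
    with hk show ?thesis
      by blast
  qed
  moreover have "?G ` alg_hom_B A n Tc \<subseteq> alg_hom_quot A n Tc Id"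
    using singleton_hom_in_alg_hom_quot_Id_iff[OF A Tc] ext by blast
  ultimately show ?thesis
    unfolding bij_betw_def by blast
qed

lemma bij_betw_pts_mod_Id: "bij_betw (map (\<lambda>c. Id `` {c})) Y (pts_mod Y Id)"
proof -
  have "inj (\<lambda>c::'a. Id `` {c})"
    by (simp add: inj_on_def)
  then have "inj (map (\<lambda>c::'a. Id `` {c}))"
    by (simp add: inj_on_def inj_map_eq_map)
  then show ?thesis
    unfolding bij_betw_def pts_mod_def by (blast intro: inj_on_subset)
qed

lemma is_congruence_Id: "is_congruence UNIV (Id :: ('a::comm_semiring_1 \<times> 'a) set)"
  unfolding is_congruence_def by (auto intro: equivI refl_onI symI transI)

theorem theorem3p12:
  fixes A :: "'b::comm_semiring_1 set" and n :: nat
    and \<rho> :: "('b \<times> 'b) set" and T :: "('b mpoly \<times> 'b mpoly) set"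
  assumes "(0::'b) \<noteq> 1"
    and "subsemiring A"
    and "is_congruence UNIV \<rho>"
    and "T \<subseteq> poly_carrier A n \<times> poly_carrier A n"
    and "T \<noteq> {}"
  shows "(\<exists>\<phi>. bij_betw \<phi> (pts_mod (zero_set n \<rho> T) \<rho>)
                     (alg_hom_quot A n (gen_congruence (poly_carrier A n) T) \<rho>))
       \<and> card (pts_mod (zero_set n \<rho> T) \<rho>)
           = card (alg_hom_quot A n (gen_congruence (poly_carrier A n) T) \<rho>)
       \<and> (\<exists>\<psi>. bij_betw \<psi> (zero_set n Id T)
                     (alg_hom_B A n (gen_congruence (poly_carrier A n) T)))
       \<and> card (zero_set n Id T) = card (alg_hom_B A n (gen_congruence (poly_carrier A n) T))"
proof -
  note A = assms(2) and \<rho> = assms(3) and T = assms(4)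
  let ?Tc = "gen_congruence (poly_carrier A n) T"
  have Tc: "is_congruence (poly_carrier A n) ?Tc"
    using subsemiring_poly_carrier[OF A] T by (rule is_congruence_gen_congruence)
  obtain \<phi> where \<phi>: "bij_betw \<phi> (pts_mod (zero_set n \<rho> T) \<rho>) (alg_hom_quot A n ?Tc \<rho>)"
    using bij_betw_inv_into[OF bij_betw_var_classes[OF A \<rho> T]] by blast
  obtain \<phi>' where \<phi>': "bij_betw \<phi>' (pts_mod (zero_set n Id T) Id) (alg_hom_quot A n ?Tc Id)"
    using bij_betw_inv_into[OF bij_betw_var_classes[OF A is_congruence_Id T]] by blast
  obtain \<chi> where \<chi>: "bij_betw \<chi> (alg_hom_quot A n ?Tc Id) (alg_hom_B A n ?Tc)"
    using bij_betw_inv_into[OF bij_betw_alg_hom_B_alg_hom_quot_Id[OF A Tc]] by blast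
  have \<psi>: "bij_betw (\<chi> \<circ> \<phi>' \<circ> map (\<lambda>c. Id `` {c})) (zero_set n Id T) (alg_hom_B A n ?Tc)"
    using bij_betw_trans[OF bij_betw_trans[OF bij_betw_pts_mod_Id \<phi>'] \<chi>] by (simp add: comp_assoc)
  show ?thesis
    using bij_betw_same_card[OF \<phi>] bij_betw_same_card[OF \<psi>] \<phi> \<psi> by blast
qed

end
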